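(* Under the hypotheses of Proposition 7.3 (i.e., $M\in\mathbb{R}^{p\times q}_+$ with $\operatorname{rank}(M)=\binom{k+1}{2}$, $\operatorname{rank}_{\mathrm{psd}}(M)=k$, and $P,Q$ the cones built from a rank factorization $M=UV$ as below), the quotient spaces $\mathcal{SF}(M)/GL(k)$ and $\Delta_k(P,Q)/GL(k)$ are homeomorphic.
   Context: $\mathcal{S}^k$ is the space of real symmetric $k\times k$ matrices, $\mathcal{S}^k_+$ the psd cone, $\langle A,B\rangle=\operatorname{trace}(AB)$, $GL(k)$ the group of invertible real $k\times k$ matrices. Fix a rank factorization $M=UV$, $U\in\mathbb{R}^{p\times d}$, $V\in\mathbb{R}^{d\times q}$, $d=\binom{k+1}{2}$, with $u_i$ the $i$-th row of $U$ and $v_j$ the $j$-th column of $V$; $P=\operatorname{cone}(u_1,\dots,u_p)$, $Q=\{x\in\mathbb{R}^d: v_j^Tx\ge0\ \forall j\}$. $\mathcal{SF}(M)$ is the set of tuples $(A_1,\dots,A_p,B_1,\dots,B_q)$ of matrices in $\mathcal{S}^k_+$ with $M_{ij}=\langle A_i,B_j\rangle$, with the subspace topology of $(\mathcal{S}^k)^{p+q}$; $GL(k)$ acts by $L\cdot(A_1,\dots,B_q)=(L^TA_1L,\dots,L^TA_pL,L^{-1}B_1L^{-T},\dots,L^{-1}B_qL^{-T})$. $\Delta_k(P,Q)$ is the set of linear maps $\pi:\mathcal{S}^k\to\mathbb{R}^d$ with $P\subseteq\pi(\mathcal{S}^k_+)\subseteq Q$ (subspace topology), with $GL(k)$ acting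 by $(g\cdot\pi)(X)=\pi(gXg^T)$. Quotients carry the quotient topology. *)

theory Defs
  imports "HOL-Analysis.Analysis"
begin

definition psd_matrix :: "real^'k^'k \<Rightarrow> bool" where
  "psd_matrix A \<longleftrightarrow> transpose A = A \<and> (\<forall>x. 0 \<le> x \<bullet> (A *v x))"

definition trace_inner :: "real^'k^'k \<Rightarrow> real^'k^'k \<Rightarrow> real" where
  "trace_inner A B = trace (A ** B)"

text \<open>Size-m matrices as functions on indices below m (needed to quantify over the size m).\<close>
definition psd_nat :: "nat \<Rightarrow> (nat \<Rightarrow> nat \<Rightarrow> real) \<Rightarrow> bool" where
  "psd_nat m A \<longleftrightarrow> (\<forall>a<m. \<forall>b<m. A a b = A b a) \<and>
     (\<forall>x::nat \<Rightarrow> real. 0 \<le> (\<Sum>a<m. \<Sum>b<m. x a * A a b * x b))"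

definition has_psd_factorization :: "real^'q^'p \<Rightarrow> nat \<Rightarrow> bool" where
  "has_psd_factorization M m \<longleftrightarrow>
     (\<exists>A B. (\<forall>i. psd_nat m (A i)) \<and> (\<forall>j. psd_nat m (B j)) \<and>
        (\<forall>i j. M $ i $ j = (\<Sum>a<m. \<Sum>b<m. A i a b * B j b a)))"

definition psd_rank :: "real^'q^'p \<Rightarrow> nat" where
  "psd_rank M = (LEAST m. has_psd_factorization M m)"

definition quotient_topology :: "'a topology \<Rightarrow> ('a \<times> 'a) set \<Rightarrow> 'a set topology" where
  "quotient_topology X r =
     topology (\<lambda>U. U \<subseteq> topspace X // r \<and> openin X {x \<in> topspace X. r `` {x} \<in> U})"

definition cone_P :: "real^'d^'p \<Rightarrow> (real^'d) set" where
  "cone_P U = {x. \<exists>c::'p \<Rightarrow> real. (\<forall>i. 0 \<le> c i) \<and> x = (\<Sum>i\<in>UNIV. c i *\<^sub>R row i U)}"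

definition cone_Q :: "real^'q^'d \<Rightarrow> (real^'d) set" where
  "cone_Q V = {x. \<forall>j. 0 \<le> column j V \<bullet> x}"

definition SF :: "real^'q^'p \<Rightarrow> (((real^'k^'k)^'p) \<times> ((real^'k^'k)^'q)) set" where
  "SF M = {(A, B). (\<forall>i. psd_matrix (A $ i)) \<and> (\<forall>j. psd_matrix (B $ j)) \<and>
                   (\<forall>i j. M $ i $ j = trace_inner (A $ i) (B $ j))}"

definition GL_act_SF :: "real^'k^'k \<Rightarrow> ((real^'k^'k)^'p) \<times> ((real^'k^'k)^'q)
                          \<Rightarrow> ((real^'k^'k)^'p) \<times> ((real^'k^'k)^'q)" where
  "GL_act_SF L AB = ((\<chi> i. transpose L ** (fst AB $ i) ** L),
                     (\<chi> j. matrix_inv L ** (snd AB $ j) ** transpose (matrix_inv L)))"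

definition SF_orbit_rel :: "real^'q^'p \<Rightarrow> ((((real^'k^'k)^'p) \<times> ((real^'k^'k)^'q)) \<times>
                                              (((real^'k^'k)^'p) \<times> ((real^'k^'k)^'q))) set" where
  "SF_orbit_rel M = {(x, y). x \<in> SF M \<and> y \<in> SF M \<and> (\<exists>L. invertible L \<and> y = GL_act_SF L x)}"

definition SF_quotient :: "real^'q^'p \<Rightarrow> (((real^'k^'k)^'p) \<times> ((real^'k^'k)^'q)) set topology" where
  "SF_quotient M = quotient_topology (subtopology euclidean (SF M)) (SF_orbit_rel M)"

text \<open>Linear maps S^k \<rightarrow> R^d are represented by (bounded) linear maps on all k\<times>k matrices
  that are invariant under transposition, i.e. that factor through the symmetrization
  X \<mapsto> (X + X^T)/2 onto S^k; this is a linear homeomorphism onto Hom(S^k, R^d).\<close>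
definition Delta :: "real^'d^'p \<Rightarrow> real^'q^'d \<Rightarrow> ((real^'k^'k) \<Rightarrow>\<^sub>L (real^'d)) set" where
  "Delta U V = {\<pi>. (\<forall>X. blinfun_apply \<pi> (transpose X) = blinfun_apply \<pi> X) \<and>
                    cone_P U \<subseteq> blinfun_apply \<pi> ` {X. psd_matrix X} \<and>
                    blinfun_apply \<pi> ` {X. psd_matrix X} \<subseteq> cone_Q V}"

definition Delta_orbit_rel :: "real^'d^'p \<Rightarrow> real^'q^'d \<Rightarrow>
     (((real^'k^'k) \<Rightarrow>\<^sub>L (real^'d)) \<times> ((real^'k^'k) \<Rightarrow>\<^sub>L (real^'d))) set" where
  "Delta_orbit_rel U V = {(\<pi>, \<pi>'). \<pi> \<in> Delta U V \<and> \<pi>' \<in> Delta U V \<and>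
      (\<exists>g. invertible g \<and> (\<forall>X. blinfun_apply \<pi>' X = blinfun_apply \<pi> (g ** X ** transpose g)))}"

definition Delta_quotient :: "real^'d^'p \<Rightarrow> real^'q^'d \<Rightarrow> ((real^'k^'k) \<Rightarrow>\<^sub>L (real^'d)) set topology" where
  "Delta_quotient U V = quotient_topology (subtopology euclidean (Delta U V)) (Delta_orbit_rel U V)"

end

theory Submission
  imports Defs
begin

text \<open>Fix a right inverse \<open>W\<close> of \<open>V\<close>. A factorization \<open>(A, B) \<in> SF(M)\<close> gives the linear map
  \<open>\<pi>(X) = (\<langle>X, B\<^sub>j\<rangle>)\<^sub>j W\<close>. Since \<open>rank M = dim S\<^sup>k\<close>, the \<open>A\<^sub>i\<close> span \<open>S\<^sup>k\<close>, so the vector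
  \<open>(\<langle>X, B\<^sub>j\<rangle>)\<^sub>j\<close> always lies in the row space of \<open>V\<close>; this yields \<open>\<pi>(A\<^sub>i) = u\<^sub>i\<close> and
  \<open>v\<^sub>j\<^sup>T \<pi>(X) = \<langle>X, B\<^sub>j\<rangle> \<ge> 0\<close> for psd \<open>X\<close>, i.e. \<open>\<pi> \<in> \<Delta>\<^sub>k(P, Q)\<close>.
  Conversely, for \<open>\<pi> \<in> \<Delta>\<^sub>k(P, Q)\<close> the rows of \<open>U\<close> lie in \<open>\<pi>(S\<^sup>k\<^sub>+)\<close> and span \<open>\<real>\<^sup>d\<close>, so
  \<open>\<pi>\<close> restricted to \<open>S\<^sup>k\<close> is a linear bijection; \<open>A\<^sub>i = \<pi>\<^sup>-\<^sup>1(u\<^sub>i)\<close> and the matrices \<open>B\<^sub>j\<close>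
  representing \<open>X \<mapsto> v\<^sub>j\<^sup>T \<pi>(X)\<close> form a factorization again. Both maps are continuous (the
  inverse of \<open>\<pi>\<close> on \<open>S\<^sup>k\<close> is a rational function of \<open>\<pi>\<close> by Cramer's rule), mutually inverse,
  and intertwine the action of \<open>L\<close> on \<open>SF(M)\<close> with that of \<open>g = L\<^sup>-\<^sup>T\<close> on \<open>\<Delta>\<^sub>k(P, Q)\<close>, so
  they descend to a homeomorphism of the quotients.\<close>

section \<open>Quotient topologies\<close>

lemma istopology_quotient:
  "istopology (\<lambda>U. U \<subseteq> topspace X // r \<and> openin X {x \<in> topspace X. r `` {x} \<in> U})"
  unfolding istopology_def
proof (rule conjI; intro allI impI)
  fix S T
  assume "S \<subseteq> topspace X // r \<and> openin X {x \<in> topspace X. r `` {x} \<in> S}"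
    and "T \<subseteq> topspace X // r \<and> openin X {x \<in> topspace X. r `` {x} \<in> T}"
  moreover have "{x \<in> topspace X. r `` {x} \<in> S \<inter> T}
      = {x \<in> topspace X. r `` {x} \<in> S} \<inter> {x \<in> topspace X. r `` {x} \<in> T}" by auto
  ultimately show "S \<inter> T \<subseteq> topspace X // r \<and> openin X {x \<in> topspace X. r `` {x} \<in> S \<inter> T}"
    by (auto intro: openin_Int)
next
  fix K
  assume "\<forall>S\<in>K. S \<subseteq> topspace X // r \<and> openin X {x \<in> topspace X. r `` {x} \<in> S}"
  moreover have "{x \<in> topspace X. r `` {x} \<in> \<Union>K} = (\<Union>S\<in>K. {x \<in> topspace X. r `` {x} \<in> S})"
    by auto
  ultimately show "\<Union>K \<subseteq> topspace X // r \<and> openin X {x \<in> topspace X. r `` {x} \<in> \<Union>K}"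
    by auto
qed

lemma openin_quotient_topology:
  "openin (quotient_topology X r) U \<longleftrightarrow>
     U \<subseteq> topspace X // r \<and> openin X {x \<in> topspace X. r `` {x} \<in> U}"
  unfolding quotient_topology_def using istopology_quotient[of X r] by (simp add: topology_inverse')

lemma topspace_quotient_topology: "topspace (quotient_topology X r) = topspace X // r"
proof -
  have "{x \<in> topspace X. r `` {x} \<in> topspace X // r} = topspace X"
    by (auto simp: quotient_def)
  then have "openin (quotient_topology X r) (topspace X // r)"
    by (simp add: openin_quotient_topology)
  then have "topspace X // r \<subseteq> topspace (quotient_topology X r)" by (rule openin_subset)
  moreover have "topspace (quotient_topology X r) \<subseteq> topspace X // r"
    using openin_topspace[of "quotient_topology X r"] by (simp only: openin_quotient_topology)
  ultimately show ?thesis by blast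
qed

lemma continuous_map_quotient_topology_image:
  assumes f: "continuous_map X Y f"
    and classes: "\<And>x. x \<in> topspace X \<Longrightarrow> f ` (r `` {x}) = s `` {f x}"
  shows "continuous_map (quotient_topology X r) (quotient_topology Y s) ((`) f)"
  unfolding continuous_map_def topspace_quotient_topology
proof (intro conjI allI impI)
  have fX: "f x \<in> topspace Y" if "x \<in> topspace X" for x
    using f that by (auto simp: continuous_map_def)
  show "(`) f \<in> topspace X // r \<rightarrow> topspace Y // s"
  proof
    fix C
    assume "C \<in> topspace X // r"
    then obtain x where "x \<in> topspace X" "C = r `` {x}"
      by (blast elim: quotientE)
    then show "f ` C \<in> topspace Y // s"
      using classes fX quotientI by metis
  qed
  fix T
  assume "openin (quotient_topology Y s) T"
  then have T: "openin Y {y \<in> topspace Y. s `` {y} \<in> T}"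
    by (simp add: openin_quotient_topology)
  have "{x \<in> topspace X. r `` {x} \<in> {C \<in> topspace X // r. f ` C \<in> T}}
      = {x \<in> topspace X. f x \<in> {y \<in> topspace Y. s `` {y} \<in> T}}"
    using fX classes by (auto intro: quotientI)
  then show "openin (quotient_topology X r) {C \<in> topspace X // r. f ` C \<in> T}"
    unfolding openin_quotient_topology using openin_continuous_map_preimage[OF f T] by auto
qed

lemma homeomorphic_maps_Image:
  assumes hm: "homeomorphic_maps X Y f g"
    and r: "r \<subseteq> topspace X \<times> topspace X" and s: "s \<subseteq> topspace Y \<times> topspace Y"
    and rel: "\<And>x x'. x \<in> topspace X \<Longrightarrow> x' \<in> topspace X \<Longrightarrow> (x, x') \<in> r \<longleftrightarrow> (f x, f x') \<in> s"
    and x: "x \<in> topspace X"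
  shows "f ` (r `` {x}) = s `` {f x}"
proof
  show "f ` (r `` {x}) \<subseteq> s `` {f x}"
    using r rel x by auto
  show "s `` {f x} \<subseteq> f ` (r `` {x})"
  proof
    fix y
    assume "y \<in> s `` {f x}"
    then have y: "y \<in> topspace Y" "(f x, f (g y)) \<in> s"
      using s hm by (auto simp: homeomorphic_maps_def)
    moreover have "g y \<in> topspace X"
      using y hm by (auto simp: homeomorphic_maps_def continuous_map_def)
    ultimately show "y \<in> f ` (r `` {x})"
      using rel x hm by (force simp: homeomorphic_maps_def)
  qed
qed

lemma homeomorphic_space_quotient_topology:
  assumes hm: "homeomorphic_maps X Y f g"
    and r: "r \<subseteq> topspace X \<times> topspace X" and s: "s \<subseteq> topspace Y \<times> topspace Y"
    and rel: "\<And>x x'. x \<in> topspace X \<Longrightarrow> x' \<in> topspace X \<Longrightarrow> (x, x') \<in> r \<longleftrightarrow> (f x, f x') \<in> s"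
  shows "quotient_topology X r homeomorphic_space quotient_topology Y s"
proof -
  have hm': "homeomorphic_maps Y X g f"
    using hm homeomorphic_maps_sym by blast
  have fX: "\<And>x. x \<in> topspace X \<Longrightarrow> f x \<in> topspace Y" and gY: "\<And>y. y \<in> topspace Y \<Longrightarrow> g y \<in> topspace X"
    and gf: "\<And>x. x \<in> topspace X \<Longrightarrow> g (f x) = x" and fg: "\<And>y. y \<in> topspace Y \<Longrightarrow> f (g y) = y"
    using hm by (auto simp: homeomorphic_maps_def continuous_map_def)
  have rel': "(y, y') \<in> s \<longleftrightarrow> (g y, g y') \<in> r" if "y \<in> topspace Y" "y' \<in> topspace Y" for y y'
    using rel[OF gY gY] that fg by simp
  have F: "f ` (r `` {x}) = s `` {f x}" if "x \<in> topspace X" for x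
    by (rule homeomorphic_maps_Image[OF hm r s]) (use rel that in auto)
  have G: "g ` (s `` {y}) = r `` {g y}" if "y \<in> topspace Y" for y
    by (rule homeomorphic_maps_Image[OF hm' s r]) (use rel' that in auto)
  show ?thesis
    unfolding homeomorphic_space_def homeomorphic_maps_def topspace_quotient_topology
  proof (intro exI conjI ballI)
    show "continuous_map (quotient_topology X r) (quotient_topology Y s) ((`) f)"
      using hm F by (intro continuous_map_quotient_topology_image) (auto simp: homeomorphic_maps_def)
    show "continuous_map (quotient_topology Y s) (quotient_topology X r) ((`) g)"
      using hm G by (intro continuous_map_quotient_topology_image) (auto simp: homeomorphic_maps_def)
    show "g ` f ` C = C" if C: "C \<in> topspace X // r" for C
    proof -
      obtain x where x: "x \<in> topspace X" "C = r `` {x}"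
        using C by (blast elim: quotientE)
      then show ?thesis
        using F[OF x(1)] G[OF fX[OF x(1)]] gf[OF x(1)] by simp
    qed
    show "f ` g ` C = C" if C: "C \<in> topspace Y // s" for C
    proof -
      obtain y where y: "y \<in> topspace Y" "C = s `` {y}"
        using C by (blast elim: quotientE)
      then show ?thesis
        using G[OF y(1)] F[OF gY[OF y(1)]] fg[OF y(1)] by simp
    qed
  qed
qed

lemma double_sum_delta:
  fixes i :: "'a::finite" and j :: "'b::finite"
  shows "(\<Sum>x\<in>UNIV. \<Sum>y\<in>UNIV. if i = x \<and> j = y then f x y else 0) = (f i j :: real)"
proof -
  have "(\<Sum>x\<in>UNIV. \<Sum>y\<in>UNIV. if i = x \<and> j = y then f x y else 0)
      = (\<Sum>x\<in>UNIV. if i = x then f x j else 0)"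
    by (rule sum.cong[OF refl]) (auto simp: sum.delta)
  then show ?thesis by (simp add: sum.delta)
qed

lemma double_sum_delta_swap:
  fixes i :: "'a::finite" and j :: "'b::finite"
  shows "(\<Sum>x\<in>UNIV. \<Sum>y\<in>UNIV. if i = y \<and> j = x then f x y else 0) = (f j i :: real)"
  by (subst sum.swap) (rule double_sum_delta)

lemma double_sum_delta':
  fixes i :: "'a::finite" and j :: "'b::finite"
  shows "(\<Sum>x\<in>UNIV. \<Sum>y\<in>UNIV. if x = i \<and> y = j then f x y else 0) = (f i j :: real)"
  using double_sum_delta[of i j f] by (simp add: eq_commute)

definition matrix_unit :: "'k \<Rightarrow> 'k \<Rightarrow> real^'k^'k" where
  "matrix_unit a b = (\<chi> i j. if i = a \<and> j = b then 1 else 0)"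

lemma matrix_unit_decomposition:
  "(X::real^'k^'k) = (\<Sum>a\<in>UNIV. \<Sum>b\<in>UNIV. X$a$b *\<^sub>R matrix_unit a b)"
  by (simp add: vec_eq_iff matrix_unit_def if_distrib[of "\<lambda>x. _ * x"] double_sum_delta
      cong: if_cong)

lemma transpose_matrix_unit_decomposition:
  "transpose (X::real^'k^'k) = (\<Sum>a\<in>UNIV. \<Sum>b\<in>UNIV. X$a$b *\<^sub>R matrix_unit b a)"
  by (simp add: vec_eq_iff matrix_unit_def transpose_def if_distrib[of "\<lambda>x. _ * x"]
      double_sum_delta_swap cong: if_cong)

lemma blinfun_apply_matrix_unit_decomposition:
  "blinfun_apply \<pi> (X::real^'k^'k) =
     (\<Sum>a\<in>UNIV. \<Sum>b\<in>UNIV. X$a$b *\<^sub>R blinfun_apply \<pi> (matrix_unit a b))"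
  by (subst matrix_unit_decomposition) (simp add: blinfun.sum_right blinfun.scaleR_right)

lemma transpose_matrix_unit: "transpose (matrix_unit a b) = matrix_unit b a"
  by (auto simp: vec_eq_iff matrix_unit_def transpose_def)

definition sym_unit :: "'k set \<Rightarrow> real^'k^'k" where
  "sym_unit T = (\<chi> i j. if {i, j} = T then 1 else 0)"

lemma matrix_unit_add_transpose:
  "matrix_unit a b + matrix_unit b a = (if a = b then 2 else 1) *\<^sub>R sym_unit {a, b}"
  by (auto simp: vec_eq_iff matrix_unit_def sym_unit_def doubleton_eq_iff)

lemma card_doubletons: "card {T::'k::finite set. \<exists>a b. T = {a, b}} = (CARD('k) + 1) choose 2"
proof -
  have eq: "{T::'k set. \<exists>a b. T = {a, b}} = {T. T \<subseteq> UNIV \<and> card T = 1} \<union> {T. T \<subseteq> UNIV \<and> card T = 2}"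
    by (auto simp: card_1_singleton_iff card_2_iff)
  have "card {T::'k set. \<exists>a b. T = {a, b}}
      = card {T::'k set. T \<subseteq> UNIV \<and> card T = 1} + card {T::'k set. T \<subseteq> UNIV \<and> card T = 2}"
    unfolding eq by (rule card_Un_disjoint) auto
  also have "\<dots> = (CARD('k) choose 1) + (CARD('k) choose 2)"
    using n_subsets[of "UNIV::'k set" 1] n_subsets[of "UNIV::'k set" 2] by simp
  also have "\<dots> = (CARD('k) + 1) choose 2"
    using binomial_Suc_Suc[of "CARD('k)" 1] by (simp add: numeral_2_eq_2)
  finally show ?thesis .
qed

lemma subspace_symmetric_matrices: "subspace {X::real^'k^'k. transpose X = X}"
  unfolding subspace_def by (auto simp: vec_eq_iff transpose_def)

lemma symmetric_matrix_in_span_sym_units: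
  assumes "transpose X = X"
  shows "(X::real^'k^'k) \<in> span (sym_unit ` {T. \<exists>a b. T = {a, b}})"
proof -
  have "X = (1/2) *\<^sub>R (X + transpose X)"
    using assms by (simp add: scaleR_2[symmetric])
  also have "X + transpose X = (\<Sum>a\<in>UNIV. \<Sum>b\<in>UNIV. X$a$b *\<^sub>R (matrix_unit a b + matrix_unit b a))"
    using matrix_unit_decomposition[of X] transpose_matrix_unit_decomposition[of X]
    by (simp add: sum.distrib scaleR_add_right)
  also have "(1/2) *\<^sub>R \<dots> \<in> span (sym_unit ` {T. \<exists>a b. T = {a, b}})"
    unfolding matrix_unit_add_transpose
    by (intro span_scale span_sum) (auto intro: span_base)
  finally show ?thesis .
qed

lemma dim_symmetric_matrices: "dim {X::real^'k^'k. transpose X = X} \<le> (CARD('k) + 1) choose 2"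
proof -
  have "dim {X::real^'k^'k. transpose X = X} \<le> card (sym_unit ` {T::'k set. \<exists>a b. T = {a, b}})"
    by (rule dim_le_card) (auto intro: symmetric_matrix_in_span_sym_units)
  also have "\<dots> \<le> card {T::'k set. \<exists>a b. T = {a, b}}"
    by (rule card_image_le) simp
  finally show ?thesis by (simp add: card_doubletons)
qed

lemma trace_inner_expand: "trace_inner X B = (\<Sum>a\<in>UNIV. \<Sum>b\<in>UNIV. X$a$b * B$b$a)"
  by (simp add: trace_inner_def trace_def matrix_matrix_mult_def)

lemma trace_inner_add_left: "trace_inner (X + Y) B = trace_inner X B + trace_inner Y B"
  by (simp add: trace_inner_expand algebra_simps sum.distrib)

lemma trace_inner_add_right: "trace_inner X (B + C) = trace_inner X B + trace_inner X C"
  by (simp add: trace_inner_expand algebra_simps sum.distrib)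

lemma trace_inner_scaleR_left: "trace_inner (r *\<^sub>R X) B = r * trace_inner X B"
  by (simp add: trace_inner_expand sum_distrib_left mult.assoc)

lemma trace_inner_scaleR_right: "trace_inner X (r *\<^sub>R B) = r * trace_inner X B"
  by (simp add: trace_inner_expand sum_distrib_left mult.left_commute)

lemma trace_inner_matrix_unit: "trace_inner (matrix_unit a b) B = B$b$a"
  by (simp add: trace_inner_expand matrix_unit_def if_distrib[of "\<lambda>x. x * _"]
      double_sum_delta' cong: if_cong)

lemma trace_inner_transpose_left:
  assumes "transpose B = B"
  shows "trace_inner (transpose X) B = trace_inner X B"
proof -
  have B: "B$a$b = B$b$a" for a b
    using assms by (metis transpose_def vec_lambda_beta)
  have "trace_inner (transpose X) B = (\<Sum>a\<in>UNIV. \<Sum>b\<in>UNIV. X$b$a * B$b$a)"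
    by (simp add: trace_inner_expand transpose_def)
  also have "\<dots> = (\<Sum>b\<in>UNIV. \<Sum>a\<in>UNIV. X$b$a * B$b$a)"
    by (rule sum.swap)
  finally show ?thesis
    by (simp add: trace_inner_expand B)
qed

lemma trace_inner_congruence:
  "trace_inner X (P ** B ** transpose P) = trace_inner (transpose P ** X ** P) (B::real^'k^'k)"
proof -
  have "trace_inner X (P ** B ** transpose P) = trace ((X ** P ** B) ** transpose P)"
    by (simp add: trace_inner_def matrix_mul_assoc)
  also have "\<dots> = trace (transpose P ** (X ** P ** B))"
    by (rule trace_mul_sym)
  finally show ?thesis
    by (simp add: trace_inner_def matrix_mul_assoc)
qed

definition outer_prod :: "real^'k \<Rightarrow> real^'k^'k" where
  "outer_prod c = (\<chi> i j. c$i * c$j)"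

lemma quadratic_form_outer_prod: "x \<bullet> (outer_prod c *v x) = (c \<bullet> x)\<^sup>2"
  by (simp add: outer_prod_def inner_vec_def matrix_vector_mult_def power2_eq_square
      sum_product sum_distrib_left mult.assoc mult.left_commute mult.commute)

lemma trace_inner_outer_prod: "trace_inner X (outer_prod c) = c \<bullet> (X *v c)"
  by (simp add: trace_inner_expand outer_prod_def inner_vec_def matrix_vector_mult_def
      sum_distrib_left mult.assoc mult.left_commute mult.commute)

lemma quadratic_form_eq_trace_inner: "x \<bullet> (B *v x) = trace_inner (outer_prod x) B"
proof -
  have "x \<bullet> (B *v x) = (\<Sum>a\<in>UNIV. \<Sum>b\<in>UNIV. x$a * x$b * B$a$b)"
    by (simp add: inner_vec_def matrix_vector_mult_def sum_distrib_left
        mult.assoc mult.left_commute mult.commute)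
  also have "\<dots> = (\<Sum>b\<in>UNIV. \<Sum>a\<in>UNIV. x$a * x$b * B$a$b)"
    by (rule sum.swap)
  finally show ?thesis
    by (simp add: trace_inner_expand outer_prod_def mult.commute)
qed

lemma quadratic_form_axis: "axis a 1 \<bullet> ((B::real^'k^'k) *v axis b 1) = B$a$b"
  by (simp add: matrix_vector_mult_basis inner_axis' column_def)

lemma scaleR_matrix_vector_assoc: "(r *\<^sub>R (A::real^'n^'m)) *v x = r *\<^sub>R (A *v x)"
  by (simp add: vec_eq_iff matrix_vector_mult_def sum_distrib_left mult.assoc)

lemma psd_matrix_symmetric: "psd_matrix X \<Longrightarrow> transpose X = X"
  by (simp add: psd_matrix_def)

lemma psd_matrix_entry_sym: "psd_matrix B \<Longrightarrow> B$i$j = B$j$i"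
  unfolding psd_matrix_def by (metis transpose_def vec_lambda_beta)

lemma psd_matrix_diag_nonneg: "psd_matrix B \<Longrightarrow> 0 \<le> B$a$a"
  unfolding psd_matrix_def using quadratic_form_axis[of a B a] by metis

lemma psd_matrix_diag_zero:
  assumes B: "psd_matrix B" and zero: "B$a$a = 0"
  shows "B$a$b = 0"
proof (rule ccontr)
  assume ne: "B$a$b \<noteq> 0"
  define s where "s = - (B$b$b + 1) / (2 * B$a$b)"
  let ?x = "s *\<^sub>R axis a 1 + axis b 1"
  have "0 \<le> ?x \<bullet> (B *v ?x)"
    using B unfolding psd_matrix_def by blast
  also have "?x \<bullet> (B *v ?x) = s * s * B$a$a + s * B$a$b + s * B$b$a + B$b$b"
    by (simp add: matrix_vector_right_distrib inner_add_left inner_add_right quadratic_form_axis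
        matrix_vector_mult_scaleR algebra_simps)
  also have "\<dots> = -1"
    using zero ne psd_matrix_entry_sym[OF B, of a b] by (simp add: s_def field_simps)
  finally show False by simp
qed

lemma psd_matrix_zero: "psd_matrix 0"
  by (simp add: psd_matrix_def vec_eq_iff transpose_def)

lemma psd_matrix_add: "psd_matrix X \<Longrightarrow> psd_matrix Y \<Longrightarrow> psd_matrix (X + Y)"
  unfolding psd_matrix_def
  by (auto simp: matrix_vector_mult_add_rdistrib inner_add_right vec_eq_iff transpose_def
      intro: add_nonneg_nonneg)

lemma psd_matrix_scaleR: "psd_matrix X \<Longrightarrow> 0 \<le> c \<Longrightarrow> psd_matrix (c *\<^sub>R X)"
  unfolding psd_matrix_def by (auto simp: scaleR_matrix_vector_assoc vec_eq_iff transpose_def)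

lemma psd_matrix_sum:
  "finite S \<Longrightarrow> (\<And>i. i \<in> S \<Longrightarrow> psd_matrix (f i)) \<Longrightarrow> psd_matrix (sum f S)"
  by (induction S rule: finite_induct) (auto intro: psd_matrix_add psd_matrix_zero)

lemma psd_matrix_outer_prod: "psd_matrix (outer_prod c)"
proof -
  have "transpose (outer_prod c) = outer_prod c"
    by (auto simp: outer_prod_def transpose_def vec_eq_iff mult.commute)
  then show ?thesis
    unfolding psd_matrix_def by (simp add: quadratic_form_outer_prod)
qed

lemma psd_matrix_congruence:
  assumes "psd_matrix B"
  shows "psd_matrix (P ** B ** transpose P)"
  unfolding psd_matrix_def
proof
  show "transpose (P ** B ** transpose P) = P ** B ** transpose P"
    using psd_matrix_symmetric[OF assms] by (simp add: matrix_transpose_mul matrix_mul_assoc)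
  have "x \<bullet> (P *v z) = (transpose P *v x) \<bullet> z" for x z
    by (simp add: dot_lmul_matrix)
  then have "x \<bullet> ((P ** B ** transpose P) *v x) = (transpose P *v x) \<bullet> (B *v (transpose P *v x))" for x
    by (simp only: matrix_vector_mul_assoc[symmetric])
  then show "\<forall>x. 0 \<le> x \<bullet> ((P ** B ** transpose P) *v x)"
    using assms by (simp add: psd_matrix_def)
qed

lemma psd_matrix_schur_complement:
  assumes B: "psd_matrix B" and pos: "B$a$a > 0"
  shows "psd_matrix (B - (1 / B$a$a) *\<^sub>R outer_prod (column a B))"
proof -
  let ?c = "column a B"
  have sym: "transpose (B - (1 / B$a$a) *\<^sub>R outer_prod ?c) = B - (1 / B$a$a) *\<^sub>R outer_prod ?c"
    using psd_matrix_entry_sym[OF B]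
    by (auto simp: transpose_def vec_eq_iff outer_prod_def mult.commute)
  have "0 \<le> x \<bullet> ((B - (1 / B$a$a) *\<^sub>R outer_prod ?c) *v x)" for x
  proof -
    define t where "t = - (?c \<bullet> x) / B$a$a"
    have Bx_col: "x \<bullet> (B *v axis a 1) = ?c \<bullet> x"
      by (simp add: matrix_vector_mult_basis inner_commute)
    have "(B *v x)$a = (\<Sum>j\<in>UNIV. B$j$a * x$j)"
      unfolding matrix_vector_mult_def vec_lambda_beta
      by (rule sum.cong) (auto simp: psd_matrix_entry_sym[OF B, of a])
    moreover have "axis a 1 \<bullet> (B *v x) = (B *v x)$a"
      by (simp add: inner_axis')
    ultimately have col_Bx: "axis a 1 \<bullet> (B *v x) = ?c \<bullet> x"
      by (simp add: inner_vec_def column_def)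
    have "0 \<le> (x + t *\<^sub>R axis a 1) \<bullet> (B *v (x + t *\<^sub>R axis a 1))"
      using B unfolding psd_matrix_def by blast
    also have "\<dots> = x \<bullet> (B *v x) + 2 * t * (?c \<bullet> x) + t * t * B$a$a"
      by (simp add: matrix_vector_right_distrib inner_add_left inner_add_right
          matrix_vector_mult_scaleR Bx_col col_Bx quadratic_form_axis algebra_simps)
    also have "\<dots> = x \<bullet> (B *v x) - (?c \<bullet> x)\<^sup>2 / B$a$a"
      using pos by (simp add: t_def field_simps power2_eq_square)
    also have "\<dots> = x \<bullet> ((B - (1 / B$a$a) *\<^sub>R outer_prod ?c) *v x)"
      by (simp add: matrix_vector_mult_diff_rdistrib inner_diff_right quadratic_form_outer_prod
          scaleR_matrix_vector_assoc)
    finally show ?thesis .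
  qed
  with sym show ?thesis
    unfolding psd_matrix_def by blast
qed

text \<open>Induction on the number of nonzero diagonal entries of \<open>B\<close>: the Schur complement of a
  pivot \<open>a\<close> is psd with a zero at \<open>(a, a)\<close>, and the subtracted outer product \<open>c c\<^sup>T\<close>
  contributes \<open>c\<^sup>T X c \<ge> 0\<close>.\<close>

lemma trace_inner_psd_nonneg:
  assumes X: "psd_matrix X"
  shows "psd_matrix B \<Longrightarrow> 0 \<le> trace_inner X B"
proof (induction "card {i. B$i$i \<noteq> 0}" arbitrary: B rule: less_induct)
  case (less B)
  show ?case
  proof (cases "\<forall>i. B$i$i = 0")
    case True
    then have "B = 0"
      using psd_matrix_diag_zero[OF less.prems] by (auto simp: vec_eq_iff)
    then show ?thesis by (simp add: trace_inner_expand)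
  next
    case False
    then obtain a where a: "B$a$a \<noteq> 0" by blast
    have pos: "B$a$a > 0"
      using psd_matrix_diag_nonneg[OF less.prems, of a] a by simp
    define c where "c = column a B"
    define B' where "B' = B - (1 / B$a$a) *\<^sub>R outer_prod c"
    have diag: "B'$i$i = B$i$i - (B$i$a)\<^sup>2 / B$a$a" for i
      by (simp add: B'_def c_def outer_prod_def column_def power2_eq_square)
    have "{i. B'$i$i \<noteq> 0} \<subset> {i. B$i$i \<noteq> 0}"
    proof
      show "{i. B'$i$i \<noteq> 0} \<subseteq> {i. B$i$i \<noteq> 0}"
        using psd_matrix_diag_zero[OF less.prems] diag by auto
      have "B'$a$a = 0"
        using diag[of a] pos by (simp add: power2_eq_square)
      then show "{i. B'$i$i \<noteq> 0} \<noteq> {i. B$i$i \<noteq> 0}"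
        using a by blast
    qed
    then have "0 \<le> trace_inner X B'"
      using less.hyps psd_matrix_schur_complement[OF less.prems pos]
      by (simp add: psubset_card_mono B'_def c_def)
    moreover have "trace_inner X B = trace_inner X (B' + (1 / B$a$a) *\<^sub>R outer_prod c)"
      by (simp add: B'_def)
    then have "trace_inner X B = trace_inner X B' + (1 / B$a$a) * (c \<bullet> (X *v c))"
      by (simp only: trace_inner_add_right trace_inner_scaleR_right trace_inner_outer_prod)
    moreover have "0 \<le> c \<bullet> (X *v c)"
      using X unfolding psd_matrix_def by blast
    ultimately show ?thesis
      using pos by simp
  qed
qed

section \<open>Inverting a transposition-invariant linear map on \<open>S\<^sup>k\<close>\<close>

text \<open>The matrix of \<open>\<pi> \<pi>\<^sup>*\<close>, the adjoint taken for the entrywise inner product.\<close>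

definition gram :: "((real^'k^'k) \<Rightarrow>\<^sub>L (real^'d)) \<Rightarrow> real^'d^'d" where
  "gram \<pi> = (\<chi> m m'. \<Sum>a\<in>UNIV. \<Sum>b\<in>UNIV.
     blinfun_apply \<pi> (matrix_unit a b) $ m * blinfun_apply \<pi> (matrix_unit a b) $ m')"

lemma gram_mult_vector:
  "gram \<pi> *v y = (\<Sum>a\<in>UNIV. \<Sum>b\<in>UNIV.
     (blinfun_apply \<pi> (matrix_unit a b) \<bullet> y) *\<^sub>R blinfun_apply \<pi> (matrix_unit a b))"
proof -
  let ?E = "\<lambda>a b. blinfun_apply \<pi> (matrix_unit a b)"
  have "(gram \<pi> *v y) $ m = (\<Sum>a\<in>UNIV. \<Sum>b\<in>UNIV. (?E a b \<bullet> y) * ?E a b $ m)" for m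
  proof -
    have "(gram \<pi> *v y) $ m = (\<Sum>m'\<in>UNIV. \<Sum>a\<in>UNIV. \<Sum>b\<in>UNIV. ?E a b $ m' * y $ m' * ?E a b $ m)"
      by (simp add: gram_def matrix_vector_mult_def sum_distrib_left sum_distrib_right
          mult.commute mult.left_commute)
    also have "\<dots> = (\<Sum>a\<in>UNIV. \<Sum>b\<in>UNIV. \<Sum>m'\<in>UNIV. ?E a b $ m' * y $ m' * ?E a b $ m)"
      by (subst sum.swap, rule sum.cong[OF refl], rule sum.swap)
    finally show ?thesis
      by (simp add: inner_vec_def sum_distrib_right)
  qed
  then show ?thesis
    by (simp add: vec_eq_iff)
qed

lemma quadratic_form_gram:
  "y \<bullet> (gram \<pi> *v y) = (\<Sum>a\<in>UNIV. \<Sum>b\<in>UNIV. (blinfun_apply \<pi> (matrix_unit a b) \<bullet> y)\<^sup>2)"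
  by (simp add: gram_mult_vector inner_sum_right power2_eq_square inner_commute)

lemma det_gram_nonzero:
  assumes surj: "surj (blinfun_apply \<pi>)"
  shows "det (gram \<pi>) \<noteq> 0"
proof -
  have "y = 0" if "gram \<pi> *v y = 0" for y
  proof -
    have "(\<Sum>a\<in>UNIV. \<Sum>b\<in>UNIV. (blinfun_apply \<pi> (matrix_unit a b) \<bullet> y)\<^sup>2) = 0"
      using that by (simp flip: quadratic_form_gram)
    then have "\<forall>a b. blinfun_apply \<pi> (matrix_unit a b) \<bullet> y = 0"
      by (simp add: sum_nonneg_eq_0_iff sum_nonneg)
    then have orth: "blinfun_apply \<pi> X \<bullet> y = 0" for X
      by (subst blinfun_apply_matrix_unit_decomposition) (simp add: inner_sum_left)
    obtain X where "y = blinfun_apply \<pi> X"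
      using surj by (metis surjD)
    then show "y = 0"
      using orth[of X] by simp
  qed
  then have "\<exists>B. B ** gram \<pi> = mat 1"
    by (simp add: matrix_left_invertible_ker)
  then have "invertible (gram \<pi>)"
    using matrix_left_right_inverse invertible_def by blast
  then show ?thesis
    by (simp add: invertible_det_nz)
qed

definition cramer_solve :: "real^'n^'n \<Rightarrow> real^'n \<Rightarrow> real^'n" where
  "cramer_solve N y = (\<chi> k. det (\<chi> i j. if j = k then y$i else N$i$j) / det N)"

lemma cramer_solve_unique: "det N \<noteq> 0 \<Longrightarrow> N *v x = y \<longleftrightarrow> x = cramer_solve N y"
  by (simp add: cramer cramer_solve_def)

lemma linear_cramer_solve:
  assumes "det N \<noteq> 0"
  shows "linear (cramer_solve N)"
proof -
  have solves: "N *v cramer_solve N y = y" for y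
    using cramer_solve_unique[OF assms] by blast
  show ?thesis
  proof (rule linearI)
    show "cramer_solve N (x + y) = cramer_solve N x + cramer_solve N y" for x y
      using cramer_solve_unique[OF assms] solves by (metis matrix_vector_right_distrib)
    show "cramer_solve N (c *\<^sub>R x) = c *\<^sub>R cramer_solve N x" for c x
      using cramer_solve_unique[OF assms] solves by (metis matrix_vector_mult_scaleR)
  qed
qed

text \<open>\<open>\<pi>\<^sup>* (\<pi> \<pi>\<^sup>*)\<^sup>-\<^sup>1 y\<close>, written out by Cramer's rule so that it is visibly continuous in \<open>\<pi>\<close>.\<close>

definition sym_preimage :: "((real^'k^'k) \<Rightarrow>\<^sub>L (real^'d)) \<Rightarrow> real^'d \<Rightarrow> real^'k^'k" where
  "sym_preimage \<pi> y = (\<chi> a b. blinfun_apply \<pi> (matrix_unit a b) \<bullet> cramer_solve (gram \<pi>) y)"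

lemma blinfun_apply_sym_preimage:
  assumes "det (gram \<pi>) \<noteq> 0"
  shows "blinfun_apply \<pi> (sym_preimage \<pi> y) = y"
proof -
  have "blinfun_apply \<pi> (sym_preimage \<pi> y) = gram \<pi> *v cramer_solve (gram \<pi>) y"
    by (subst blinfun_apply_matrix_unit_decomposition) (simp add: gram_mult_vector sym_preimage_def)
  then show ?thesis
    using cramer_solve_unique[OF assms] by metis
qed

lemma sym_preimage_symmetric:
  assumes "\<forall>X. blinfun_apply \<pi> (transpose X) = blinfun_apply \<pi> X"
  shows "transpose (sym_preimage \<pi> y) = sym_preimage \<pi> y"
  by (simp add: vec_eq_iff transpose_def sym_preimage_def) (metis assms transpose_matrix_unit)

lemma linear_sym_preimage:
  assumes "det (gram \<pi>) \<noteq> 0"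
  shows "linear (sym_preimage \<pi>)"
  using linear_cramer_solve[OF assms]
  by (intro linearI) (simp_all add: vec_eq_iff sym_preimage_def linear_add linear_scale inner_add_right)

text \<open>A dimension count: \<open>sym_preimage \<pi>\<close> is injective into \<open>S\<^sup>k\<close>, whose dimension is at most \<open>d\<close>.\<close>

lemma sym_preimage_blinfun_apply:
  fixes \<pi> :: "(real^'k^'k) \<Rightarrow>\<^sub>L (real^'d)"
  assumes sym: "\<forall>X. blinfun_apply \<pi> (transpose X) = blinfun_apply \<pi> X"
    and surj: "surj (blinfun_apply \<pi>)"
    and dim_d: "CARD('d) = (CARD('k) + 1) choose 2"
    and X: "transpose X = X"
  shows "sym_preimage \<pi> (blinfun_apply \<pi> X) = X"
proof -
  let ?R = "range (sym_preimage \<pi>)"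
  have det: "det (gram \<pi>) \<noteq> 0"
    using det_gram_nonzero[OF surj] .
  have lin: "linear (sym_preimage \<pi>)"
    using linear_sym_preimage[OF det] .
  have inj: "inj (sym_preimage \<pi>)"
    by (metis injI blinfun_apply_sym_preimage[OF det])
  have "dim ?R = CARD('d)"
    using dim_image_eq[OF lin, of UNIV] inj by (simp add: inj_on_subset)
  moreover have "?R \<subseteq> {X. transpose X = X}"
    using sym_preimage_symmetric[OF sym] by auto
  ultimately have "?R = {X. transpose X = X}"
    using dim_symmetric_matrices[where 'k='k] dim_d
    by (intro subspace_dim_equal linear_subspace_image[OF lin] subspace_UNIV
        subspace_symmetric_matrices) auto
  then obtain y where "X = sym_preimage \<pi> y"
    using X by blast
  then show ?thesis
    using blinfun_apply_sym_preimage[OF det] by simp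
qed

lemma continuous_on_det [continuous_intros]:
  "continuous_on S f \<Longrightarrow> continuous_on S (\<lambda>x. det (f x :: real^'n^'n))"
  unfolding det_def by (intro continuous_intros)

lemma continuous_on_sym_preimage:
  assumes "\<And>\<pi>. \<pi> \<in> S \<Longrightarrow> det (gram \<pi>) \<noteq> 0"
  shows "continuous_on S (\<lambda>\<pi>. sym_preimage \<pi> y)"
proof -
  have gram: "continuous_on S gram"
    unfolding gram_def by (intro continuous_intros)
  have "continuous_on S (\<lambda>\<pi>. if j = k then y $ i else gram \<pi> $ i $ j)" for i j k
    using gram by (cases "j = k") (auto intro!: continuous_intros)
  with gram show ?thesis
    unfolding sym_preimage_def cramer_solve_def
    by (intro continuous_intros) (use assms in auto)
qed

section \<open>Psd factorizations versus points of \<open>\<Delta>\<^sub>k(P, Q)\<close>\<close>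

lemma Delta_transpose: "\<pi> \<in> Delta U V \<Longrightarrow> blinfun_apply \<pi> (transpose X) = blinfun_apply \<pi> X"
  by (simp add: Delta_def)

lemma Delta_nonneg: "\<pi> \<in> Delta U V \<Longrightarrow> psd_matrix X \<Longrightarrow> 0 \<le> column j V \<bullet> blinfun_apply \<pi> X"
  unfolding Delta_def cone_Q_def by blast

lemma row_in_cone_P: "row i U \<in> cone_P U"
  unfolding cone_P_def
  by (intro CollectI exI[of _ "\<lambda>i'. if i' = i then 1 else 0"])
    (simp add: if_distrib[of "\<lambda>c. c *\<^sub>R _"] cong: if_cong)

lemma Delta_row_image:
  assumes "\<pi> \<in> Delta U V"
  obtains X where "psd_matrix X" "row i U = blinfun_apply \<pi> X"
  using assms row_in_cone_P[of i U] unfolding Delta_def by blast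

lemma Delta_surj:
  assumes \<pi>: "\<pi> \<in> Delta U V" and inj: "inj ((*v) U)"
  shows "surj (blinfun_apply \<pi>)"
proof -
  have "span (rows U) = UNIV"
    using inj by (simp flip: matrix_left_invertible_span_rows matrix_left_invertible_injective)
  moreover have "row i U \<in> range (blinfun_apply \<pi>)" for i
    by (metis Delta_row_image[OF \<pi>] rangeI)
  then have "rows U \<subseteq> range (blinfun_apply \<pi>)"
    by (auto simp: rows_def)
  moreover have "subspace (range (blinfun_apply \<pi>))"
    by (intro linear_subspace_image subspace_UNIV bounded_linear.linear blinfun.bounded_linear_right)
  ultimately show ?thesis
    by (metis span_minimal top.extremum_uniqueI)
qed

definition adjoint_factors :: "real^'q^'d \<Rightarrow> ((real^'k^'k) \<Rightarrow>\<^sub>L (real^'d)) \<Rightarrow> (real^'k^'k)^'q" where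
  "adjoint_factors V \<pi> = (\<chi> j. \<chi> b a. column j V \<bullet> blinfun_apply \<pi> (matrix_unit a b))"

lemma trace_inner_adjoint_factors:
  "trace_inner X (adjoint_factors V \<pi> $ j) = column j V \<bullet> blinfun_apply \<pi> X"
  by (subst blinfun_apply_matrix_unit_decomposition)
    (simp add: trace_inner_expand adjoint_factors_def inner_sum_right)

lemma psd_adjoint_factors:
  assumes \<pi>: "\<pi> \<in> Delta U V"
  shows "psd_matrix (adjoint_factors V \<pi> $ j)"
  unfolding psd_matrix_def
proof
  show "transpose (adjoint_factors V \<pi> $ j) = adjoint_factors V \<pi> $ j"
    by (simp add: vec_eq_iff transpose_def adjoint_factors_def)
      (metis Delta_transpose[OF \<pi>] transpose_matrix_unit)
  show "\<forall>x. 0 \<le> x \<bullet> (adjoint_factors V \<pi> $ j *v x)"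
    using Delta_nonneg[OF \<pi> psd_matrix_outer_prod]
    by (simp add: quadratic_form_eq_trace_inner trace_inner_adjoint_factors)
qed

lemma SF_memberD:
  assumes "(A, B) \<in> SF M"
  shows "\<And>i. psd_matrix (A$i)" "\<And>j. psd_matrix (B$j)" "\<And>i j. M$i$j = trace_inner (A$i) (B$j)"
  using assms by (auto simp: SF_def)

definition trace_pairing :: "(real^'k^'k)^'q \<Rightarrow> real^'k^'k \<Rightarrow> real^'q" where
  "trace_pairing B X = (\<chi> j. trace_inner X (B$j))"

lemma linear_trace_pairing: "linear (trace_pairing B)"
  by (rule linearI) (simp_all add: vec_eq_iff trace_pairing_def trace_inner_add_left
      trace_inner_scaleR_left)

lemma trace_pairing_transpose:
  "(\<And>j. transpose (B$j) = B$j) \<Longrightarrow> trace_pairing B (transpose X) = trace_pairing B X"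
  by (simp add: vec_eq_iff trace_pairing_def trace_inner_transpose_left)

lemma row_eq_trace_pairing: "(A, B) \<in> SF M \<Longrightarrow> row i M = trace_pairing B (A$i)"
  by (simp add: vec_eq_iff row_def trace_pairing_def SF_memberD(3))

lemma rows_eq_trace_pairing_image: "(A, B) \<in> SF M \<Longrightarrow> rows M = trace_pairing B ` range (($) A)"
  by (auto simp: rows_def row_eq_trace_pairing)

text \<open>This is where \<open>rank M = dim S\<^sup>k\<close> enters.\<close>

lemma span_SF_left_factors:
  fixes M :: "real^'q^'p" and A :: "(real^'k^'k)^'p"
  assumes SF: "(A, B) \<in> SF M" and rank: "rank M = (CARD('k) + 1) choose 2"
  shows "span (range (($) A)) = {X. transpose X = X}"
proof -
  have sub: "span (range (($) A)) \<subseteq> {X. transpose X = X}"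
    using SF_memberD(1)[OF SF] psd_matrix_symmetric
    by (intro span_minimal subspace_symmetric_matrices) auto
  have "rank M \<le> dim (range (($) A))"
    unfolding row_rank_def rows_eq_trace_pairing_image[OF SF] by (rule dim_image_le[OF linear_trace_pairing])
  then have "dim {X::real^'k^'k. transpose X = X} \<le> dim (span (range (($) A)))"
    using dim_symmetric_matrices[where 'k='k] rank by simp
  with sub show ?thesis
    by (intro subspace_dim_equal subspace_span subspace_symmetric_matrices) auto
qed

lemma trace_pairing_in_row_space:
  fixes M :: "real^'q^'p" and A :: "(real^'k^'k)^'p" and U :: "real^'d^'p"
  assumes SF: "(A, B) \<in> SF M" and rank: "rank M = (CARD('k) + 1) choose 2"
    and M: "M = U ** V"
  shows "\<exists>z. trace_pairing B X = z v* V"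
proof -
  let ?T = "range (\<lambda>z. z v* V)"
  have B_sym: "\<And>j. transpose (B$j) = B$j"
    using SF_memberD(2)[OF SF] psd_matrix_symmetric by blast
  have T: "subspace ?T"
    by (intro linear_subspace_image subspace_UNIV)
      (simp add: linearI vector_matrix_left_distrib scaleR_vector_matrix_assoc)
  have "rows M \<subseteq> ?T"
    by (auto simp: rows_def M row_def vector_matrix_mult_def matrix_matrix_mult_def
        vec_eq_iff intro!: exI[of _ "row _ U"])
  then have span_rows: "span (rows M) \<subseteq> ?T"
    by (rule span_minimal[OF _ T])
  define S where "S = (1/2) *\<^sub>R (X + transpose X)"
  have "transpose S = S"
    by (simp add: S_def vec_eq_iff transpose_def add.commute)
  then have "trace_pairing B S \<in> trace_pairing B ` span (range (($) A))"
    using span_SF_left_factors[OF SF rank] by blast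
  also have "\<dots> = span (rows M)"
    by (simp add: rows_eq_trace_pairing_image[OF SF] span_linear_image[OF linear_trace_pairing])
  finally have "trace_pairing B S \<in> ?T"
    using span_rows by blast
  moreover have "trace_pairing B S = trace_pairing B X"
    using linear_trace_pairing[of B] trace_pairing_transpose[OF B_sym]
    by (simp add: S_def linear_add linear_scale scaleR_2[symmetric])
  ultimately show ?thesis
    by auto
qed

definition sf_to_Delta :: "real^'d^'q \<Rightarrow> ((real^'k^'k)^'p) \<times> ((real^'k^'k)^'q) \<Rightarrow>
    (real^'k^'k) \<Rightarrow>\<^sub>L (real^'d)" where
  "sf_to_Delta W AB = Blinfun (\<lambda>X. trace_pairing (snd AB) X v* W)"

lemma blinfun_apply_sf_to_Delta:
  "blinfun_apply (sf_to_Delta W AB) X = trace_pairing (snd AB) X v* W"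
proof -
  have "linear (\<lambda>X. trace_pairing (snd AB) X v* W)"
    using linear_trace_pairing[of "snd AB"]
    by (intro linearI) (simp_all add: linear_add linear_scale vector_matrix_left_distrib
        scaleR_vector_matrix_assoc)
  then show ?thesis
    by (simp add: sf_to_Delta_def bounded_linear_Blinfun_apply linear_conv_bounded_linear)
qed

lemma column_inner_sf_to_Delta:
  fixes M :: "real^'q^'p" and A :: "(real^'k^'k)^'p" and U :: "real^'d^'p"
  assumes SF: "(A, B) \<in> SF M" and rank: "rank M = (CARD('k) + 1) choose 2"
    and M: "M = U ** V" and W: "V ** W = mat 1"
  shows "column j V \<bullet> blinfun_apply (sf_to_Delta W (A, B)) X = trace_inner X (B$j)"
proof -
  obtain z where z: "trace_pairing B X = z v* V"
    using trace_pairing_in_row_space[OF SF rank M] by blast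
  have "blinfun_apply (sf_to_Delta W (A, B)) X v* V = trace_pairing B X"
    by (simp add: blinfun_apply_sf_to_Delta z vector_matrix_mul_assoc W
        flip: matrix_mul_assoc)
  then show ?thesis
    by (simp add: column_def inner_vec_def vector_matrix_mult_def trace_pairing_def
        vec_eq_iff mult.commute)
qed

lemma sf_to_Delta_left_factor:
  assumes SF: "(A, B) \<in> SF M" and M: "M = U ** V" and W: "V ** W = mat 1"
  shows "blinfun_apply (sf_to_Delta W (A, B)) (A$i) = row i U"
proof -
  have "row i M = row i U v* V"
    by (simp add: M vec_eq_iff row_def matrix_matrix_mult_def vector_matrix_mult_def)
  then show ?thesis
    using row_eq_trace_pairing[OF SF, of i]
    by (simp add: blinfun_apply_sf_to_Delta vector_matrix_mul_assoc W)
qed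

lemma sf_to_Delta_in_Delta:
  fixes M :: "real^'q^'p" and A :: "(real^'k^'k)^'p" and U :: "real^'d^'p"
  assumes SF: "(A, B) \<in> SF M" and rank: "rank M = (CARD('k) + 1) choose 2"
    and M: "M = U ** V" and W: "V ** W = mat 1"
  shows "sf_to_Delta W (A, B) \<in> Delta U V"
  unfolding Delta_def
proof (intro CollectI conjI allI subsetI)
  let ?\<pi> = "blinfun_apply (sf_to_Delta W (A, B))"
  have "\<And>j. transpose (B$j) = B$j"
    using SF_memberD(2)[OF SF] psd_matrix_symmetric by blast
  then show "?\<pi> (transpose X) = ?\<pi> X" for X
    by (simp add: blinfun_apply_sf_to_Delta trace_pairing_transpose)
  show "x \<in> ?\<pi> ` {X. psd_matrix X}" if x: "x \<in> cone_P U" for x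
  proof -
    obtain c where c: "\<forall>i. 0 \<le> c i" "x = (\<Sum>i\<in>UNIV. c i *\<^sub>R row i U)"
      using x by (auto simp: cone_P_def)
    let ?Y = "\<Sum>i\<in>UNIV. c i *\<^sub>R A$i"
    have "psd_matrix ?Y"
      using c(1) SF_memberD(1)[OF SF] by (auto intro!: psd_matrix_sum psd_matrix_scaleR)
    moreover have "?\<pi> ?Y = x"
      by (simp add: c(2) blinfun.sum_right blinfun.scaleR_right sf_to_Delta_left_factor[OF SF M W])
    ultimately show ?thesis
      by force
  qed
  show "x \<in> cone_Q V" if "x \<in> ?\<pi> ` {X. psd_matrix X}" for x
    using that column_inner_sf_to_Delta[OF SF rank M W]
      trace_inner_psd_nonneg[OF _ SF_memberD(2)[OF SF]]
    by (auto simp: cone_Q_def)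
qed

definition Delta_to_sf :: "real^'d^'p \<Rightarrow> real^'q^'d \<Rightarrow> ((real^'k^'k) \<Rightarrow>\<^sub>L (real^'d)) \<Rightarrow>
    ((real^'k^'k)^'p) \<times> ((real^'k^'k)^'q)" where
  "Delta_to_sf U V \<pi> = ((\<chi> i. sym_preimage \<pi> (row i U)), adjoint_factors V \<pi>)"

lemma Delta_to_sf_in_SF:
  fixes \<pi> :: "(real^'k^'k) \<Rightarrow>\<^sub>L (real^'d)" and U :: "real^'d^'p" and V :: "real^'q^'d"
  assumes \<pi>: "\<pi> \<in> Delta U V" and inj: "inj ((*v) U)"
    and dim_d: "CARD('d) = (CARD('k) + 1) choose 2"
  shows "Delta_to_sf U V \<pi> \<in> SF (U ** V)"
proof -
  have surj: "surj (blinfun_apply \<pi>)"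
    using Delta_surj[OF \<pi> inj] .
  have sym: "\<forall>X. blinfun_apply \<pi> (transpose X) = blinfun_apply \<pi> X"
    using Delta_transpose[OF \<pi>] by blast
  have "psd_matrix (sym_preimage \<pi> (row i U))" for i
  proof -
    obtain X where "psd_matrix X" "row i U = blinfun_apply \<pi> X"
      by (rule Delta_row_image[OF \<pi>])
    then show ?thesis
      using sym_preimage_blinfun_apply[OF sym surj dim_d psd_matrix_symmetric] by simp
  qed
  moreover have "(U ** V)$i$j = column j V \<bullet> row i U" for i j
    by (simp add: matrix_matrix_mult_def inner_vec_def row_def column_def mult.commute)
  ultimately show ?thesis
    using psd_adjoint_factors[OF \<pi>] blinfun_apply_sym_preimage[OF det_gram_nonzero[OF surj]]
    by (simp add: SF_def Delta_to_sf_def trace_inner_adjoint_factors)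
qed

lemma sf_to_Delta_Delta_to_sf:
  assumes W: "V ** W = mat 1"
  shows "sf_to_Delta W (Delta_to_sf U V \<pi>) = \<pi>"
proof (rule blinfun_eqI)
  fix X
  have "trace_pairing (adjoint_factors V \<pi>) X = blinfun_apply \<pi> X v* V"
    by (simp add: vec_eq_iff trace_pairing_def trace_inner_adjoint_factors column_def
        inner_vec_def vector_matrix_mult_def mult.commute)
  then show "blinfun_apply (sf_to_Delta W (Delta_to_sf U V \<pi>)) X = blinfun_apply \<pi> X"
    by (simp add: blinfun_apply_sf_to_Delta Delta_to_sf_def vector_matrix_mul_assoc W)
qed

lemma Delta_to_sf_sf_to_Delta:
  fixes M :: "real^'q^'p" and A :: "(real^'k^'k)^'p" and U :: "real^'d^'p"
  assumes SF: "(A, B) \<in> SF M" and rank: "rank M = (CARD('k) + 1) choose 2"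
    and M: "M = U ** V" and W: "V ** W = mat 1" and inj: "inj ((*v) U)"
    and dim_d: "CARD('d) = (CARD('k) + 1) choose 2"
  shows "Delta_to_sf U V (sf_to_Delta W (A, B)) = (A, B)"
proof -
  let ?\<pi> = "sf_to_Delta W (A, B)"
  have \<pi>: "?\<pi> \<in> Delta U V"
    using sf_to_Delta_in_Delta[OF SF rank M W] .
  have "adjoint_factors V ?\<pi> = B"
    by (simp add: vec_eq_iff adjoint_factors_def column_inner_sf_to_Delta[OF SF rank M W]
        trace_inner_matrix_unit)
  moreover have "sym_preimage ?\<pi> (row i U) = A$i" for i
    using sym_preimage_blinfun_apply[OF _ Delta_surj[OF \<pi> inj] dim_d
        psd_matrix_symmetric[OF SF_memberD(1)[OF SF]]] Delta_transpose[OF \<pi>]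
      sf_to_Delta_left_factor[OF SF M W]
    by simp
  ultimately show ?thesis
    by (simp add: Delta_to_sf_def vec_eq_iff)
qed

lemma continuous_on_sf_to_Delta:
  fixes S :: "(((real^'k^'k)^'p) \<times> ((real^'k^'k)^'q)) set" and W :: "real^'d^'q"
  shows "continuous_on S (sf_to_Delta W)"
proof (rule continuous_on_blinfun_componentwise)
  fix X :: "real^'k^'k"
  show "continuous_on S (\<lambda>AB. blinfun_apply (sf_to_Delta W AB) X)"
    unfolding blinfun_apply_sf_to_Delta trace_pairing_def vector_matrix_mult_def trace_inner_expand
    by (intro continuous_intros)
qed

lemma continuous_on_Delta_to_sf:
  assumes "inj ((*v) U)"
  shows "continuous_on (Delta U V) (Delta_to_sf U V)"
  unfolding Delta_to_sf_def adjoint_factors_def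
  using det_gram_nonzero[OF Delta_surj[OF _ assms]]
  by (intro continuous_intros continuous_on_sym_preimage) auto

section \<open>The two \<open>GL(k)\<close>-actions\<close>

lemma matrix_mul_matrix_inv:
  assumes "invertible L"
  shows "L ** matrix_inv L = mat 1" and "matrix_inv L ** L = mat 1"
proof -
  have "\<exists>L'. L ** L' = mat 1 \<and> L' ** L = mat 1"
    using assms by (simp add: invertible_def)
  then have "L ** matrix_inv L = mat 1 \<and> matrix_inv L ** L = mat 1"
    unfolding matrix_inv_def by (rule someI_ex)
  then show "L ** matrix_inv L = mat 1" and "matrix_inv L ** L = mat 1"
    by auto
qed

lemma matrix_inv_transpose_matrix_inv:
  fixes L :: "'a::comm_semiring_1^'n^'n"
  assumes "invertible L"
  shows "invertible (transpose (matrix_inv L))" and "matrix_inv (transpose (matrix_inv L)) = transpose L"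
proof -
  let ?g = "transpose (matrix_inv L)"
  have g: "?g ** transpose L = mat 1" "transpose L ** ?g = mat 1"
    using matrix_mul_matrix_inv[OF assms] by (simp_all add: matrix_transpose_mul[symmetric])
  then show "invertible ?g"
    by (auto simp: invertible_def)
  then have "matrix_inv ?g = matrix_inv ?g ** (?g ** transpose L)"
    by (simp add: g)
  also have "\<dots> = transpose L"
    by (simp add: matrix_mul_assoc matrix_mul_matrix_inv[OF \<open>invertible ?g\<close>])
  finally show "matrix_inv ?g = transpose L" .
qed

lemma GL_act_SF_in_SF:
  assumes L: "invertible L" and x: "x \<in> SF M"
  shows "GL_act_SF L x \<in> SF M"
proof -
  obtain A B where AB: "x = (A, B)"
    by fastforce
  have SF: "(A, B) \<in> SF M"
    using x AB by simp
  let ?P = "matrix_inv L"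
  have "trace_inner (transpose L ** A$i ** L) (?P ** B$j ** transpose ?P)
      = trace_inner (transpose (L ** ?P) ** A$i ** (L ** ?P)) (B$j)" for i j
    by (simp only: trace_inner_congruence matrix_transpose_mul matrix_mul_assoc)
  then have "trace_inner (transpose L ** A$i ** L) (?P ** B$j ** transpose ?P) = M$i$j" for i j
    by (simp add: matrix_mul_matrix_inv[OF L] SF_memberD(3)[OF SF])
  moreover have "psd_matrix (transpose L ** A$i ** L)" for i
    using psd_matrix_congruence[OF SF_memberD(1)[OF SF], of "transpose L" i] by simp
  moreover have "psd_matrix (?P ** B$j ** transpose ?P)" for j
    by (rule psd_matrix_congruence[OF SF_memberD(2)[OF SF]])
  ultimately show ?thesis
    by (simp add: AB GL_act_SF_def SF_def)
qed

lemma blinfun_apply_sf_to_Delta_GL_act: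
  "blinfun_apply (sf_to_Delta W (GL_act_SF L x)) X
     = blinfun_apply (sf_to_Delta W x) (transpose (matrix_inv L) ** X ** matrix_inv L)"
  using trace_inner_congruence[of X "matrix_inv L"]
  by (simp add: blinfun_apply_sf_to_Delta trace_pairing_def GL_act_SF_def)

lemma SF_orbit_rel_iff_Delta_orbit_rel:
  fixes M :: "real^'q^'p" and U :: "real^'d^'p" and V :: "real^'q^'d"
    and x y :: "((real^'k^'k)^'p) \<times> ((real^'k^'k)^'q)"
  assumes rank: "rank M = (CARD('k) + 1) choose 2" and M: "M = U ** V"
    and W: "V ** W = mat 1" and inj: "inj ((*v) U)"
    and dim_d: "CARD('d) = (CARD('k) + 1) choose 2"
    and x: "x \<in> SF M" and y: "y \<in> SF M"
  shows "(x, y) \<in> SF_orbit_rel M \<longleftrightarrow> (sf_to_Delta W x, sf_to_Delta W y) \<in> Delta_orbit_rel U V"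
proof -
  have in_Delta: "sf_to_Delta W z \<in> Delta U V" if "z \<in> SF M" for z :: "((real^'k^'k)^'p) \<times> ((real^'k^'k)^'q)"
    using sf_to_Delta_in_Delta[OF _ rank M W, of "fst z" "snd z"] that by simp
  have left_inverse: "Delta_to_sf U V (sf_to_Delta W z) = z" if "z \<in> SF M" for z :: "((real^'k^'k)^'p) \<times> ((real^'k^'k)^'q)"
    using Delta_to_sf_sf_to_Delta[OF _ rank M W inj dim_d, of "fst z" "snd z"] that by simp
  show ?thesis
  proof
    assume "(x, y) \<in> SF_orbit_rel M"
    then obtain L where L: "invertible L" "y = GL_act_SF L x"
      by (auto simp: SF_orbit_rel_def)
    then have "blinfun_apply (sf_to_Delta W y) X
        = blinfun_apply (sf_to_Delta W x) (transpose (matrix_inv L) ** X ** transpose (transpose (matrix_inv L)))" for X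
      by (simp add: blinfun_apply_sf_to_Delta_GL_act)
    with L show "(sf_to_Delta W x, sf_to_Delta W y) \<in> Delta_orbit_rel U V"
      using in_Delta[OF x] in_Delta[OF y] matrix_inv_transpose_matrix_inv(1)[OF L(1)]
      unfolding Delta_orbit_rel_def by blast
  next
    assume "(sf_to_Delta W x, sf_to_Delta W y) \<in> Delta_orbit_rel U V"
    then obtain g where g: "invertible g"
      "\<And>X. blinfun_apply (sf_to_Delta W y) X = blinfun_apply (sf_to_Delta W x) (g ** X ** transpose g)"
      by (auto simp: Delta_orbit_rel_def)
    let ?L = "transpose (matrix_inv g)"
    have "sf_to_Delta W (GL_act_SF ?L x) = sf_to_Delta W y"
      using g matrix_inv_transpose_matrix_inv(2)[OF g(1)]
      by (intro blinfun_eqI) (simp add: blinfun_apply_sf_to_Delta_GL_act)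
    then have "GL_act_SF ?L x = y"
      using left_inverse[OF GL_act_SF_in_SF[OF _ x]] left_inverse[OF y]
        matrix_inv_transpose_matrix_inv(1)[OF g(1)] by metis
    then show "(x, y) \<in> SF_orbit_rel M"
      using x y matrix_inv_transpose_matrix_inv(1)[OF g(1)] unfolding SF_orbit_rel_def by blast
  qed
qed

lemma inj_left_factor_if_full_rank:
  fixes U :: "real^'d^'p" and V :: "real^'q^'d"
  assumes "rank (U ** V) = CARD('d)"
  shows "inj ((*v) U)"
proof -
  have "rank U = CARD('d)"
    using rank_mul_le_left[of U V] rank_bound[of U] assms by simp
  then show ?thesis
    using full_rank_injective by blast
qed

lemma right_invertible_right_factor_if_full_rank:
  fixes U :: "real^'d^'p" and V :: "real^'q^'d"
  assumes "rank (U ** V) = CARD('d)"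
  obtains W where "V ** W = mat 1"
proof -
  have "rank V = CARD('d)"
    using rank_mul_le_right[of U V] rank_bound[of V] assms by simp
  then have "surj ((*v) V)"
    using full_rank_surjective by blast
  then show ?thesis
    using matrix_right_invertible_surjective that by blast
qed

lemma homeomorphic_maps_sf_to_Delta:
  fixes U :: "real^'d^'p" and V :: "real^'q^'d"
  assumes rank: "rank (U ** V) = (CARD('k) + 1) choose 2"
    and dim_d: "CARD('d) = (CARD('k) + 1) choose 2" and W: "V ** W = mat 1"
  shows "homeomorphic_maps
    (subtopology euclidean (SF (U ** V) :: (((real^'k^'k)^'p) \<times> ((real^'k^'k)^'q)) set))
    (subtopology euclidean (Delta U V)) (sf_to_Delta W) (Delta_to_sf U V)"
proof -
  have inj: "inj ((*v) U)"
    using inj_left_factor_if_full_rank[of U V] rank dim_d by simp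
  show ?thesis
    unfolding homeomorphic_maps_def
    using sf_to_Delta_in_Delta[OF _ rank refl W] continuous_on_sf_to_Delta
      Delta_to_sf_in_SF[OF _ inj dim_d] continuous_on_Delta_to_sf[OF inj]
      Delta_to_sf_sf_to_Delta[OF _ rank refl W inj dim_d] sf_to_Delta_Delta_to_sf[OF W]
    by (auto simp: Pi_iff)
qed

theorem corollary7p4:
  fixes M :: "real^'q^'p" and U :: "real^'d^'p" and V :: "real^'q^'d"
  assumes nonneg: "\<forall>i j. 0 \<le> M $ i $ j"
    and dim_d: "CARD('d) = (CARD('k) + 1) choose 2"
    and rank_M: "rank M = CARD('d)"
    and psd_rank_M: "psd_rank M = CARD('k)"
    and fact: "M = U ** V"
  shows "(SF_quotient M :: (((real^'k^'k)^'p) \<times> ((real^'k^'k)^'q)) set topology)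
           homeomorphic_space (Delta_quotient U V :: ((real^'k^'k) \<Rightarrow>\<^sub>L (real^'d)) set topology)"
proof -
  obtain W where W: "V ** W = mat 1"
    using right_invertible_right_factor_if_full_rank[of U V] rank_M fact by blast
  have inj: "inj ((*v) U)"
    using inj_left_factor_if_full_rank[of U V] rank_M fact by blast
  have rank: "rank M = (CARD('k) + 1) choose 2"
    using rank_M dim_d by simp
  show ?thesis
    unfolding SF_quotient_def Delta_quotient_def
  proof (rule homeomorphic_space_quotient_topology)
    show "homeomorphic_maps (subtopology euclidean (SF M :: (((real^'k^'k)^'p) \<times> ((real^'k^'k)^'q)) set))
        (subtopology euclidean (Delta U V)) (sf_to_Delta W) (Delta_to_sf U V)"
      using homeomorphic_maps_sf_to_Delta[of U V, OF _ dim_d W] rank fact by simp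
    show "(x, y) \<in> SF_orbit_rel M \<longleftrightarrow> (sf_to_Delta W x, sf_to_Delta W y) \<in> Delta_orbit_rel U V"
      if "x \<in> topspace (subtopology euclidean (SF M))" "y \<in> topspace (subtopology euclidean (SF M))"
      for x y :: "((real^'k^'k)^'p) \<times> ((real^'k^'k)^'q)"
      using SF_orbit_rel_iff_Delta_orbit_rel[OF rank fact W inj dim_d] that by simp
  qed (auto simp: SF_orbit_rel_def Delta_orbit_rel_def)
qed

end
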